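(* Let $M$ be a complete pointed metric space, $k\in\mathbb N$, and let $(\gamma_n)_n=\big(\sum_{i=1}^k a_i(n)\delta(x_i(n))\big)_n\subset\mathcal{FS}_k(M)$ (with $a_i(n)\in\mathbb K$, $x_i(n)\in M$) be a sequence converging weakly to an element $\gamma\in\mathcal{FS}_k(M)$. Then for every $p\in\mathrm{supp}(\gamma)$ there exists $1\le m\le k$ such that $\liminf_{n\to\infty} d(x_m(n),p)=0$.
   Context: Scalars are $\mathbb K=\mathbb R$ or $\mathbb C$. For a pointed metric space $(M,d,0_M)$, $\mathrm{Lip}_0(M)$ denotes the Banach space of Lipschitz functions $g\colon M\to\mathbb K$ with $g(0_M)=0$ normed by the best Lipschitz constant; $\delta(x)\in\mathrm{Lip}_0(M)^*$ is evaluation at $x$ (note $\delta(0_M)=0$); the Lipschitz-free space $\mathcal F(M)$ is the norm-closed linear span of $\{\delta(x):x\in M\}$ in $\mathrm{Lip}_0(M)^*$, with dual $\mathrm{Lip}_0(M)$. For a closed $K\subset M$ with $0_M\in K$, $\mathcal F(K)$ is identified with the closed span of $\{\delta(x):x\in K\}$ in $\mathcal F(M)$. The support $\mathrm{supp}(\gamma)$ of $\gamma\in\mathcal F(M)$ is the smallest closed $K\subset M$ with $\gamma\in\mathcal F(K)$. $\mathcal{FS}_k(M)$ is the set of $\gamma\in\mathcal F(M)$ whose support is finite with at most $k$ points; equivalently $\gamma=\sum_{i=1}^k a_i\delta(x_i)$. *)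

theory Defs
  imports "HOL-Analysis.Analysis"
begin

text \<open>Elements of the dual Lip_0(M)^* are represented as functionals on 'a => 'k;
  only their values on Lip_0(M) matter.\<close>

definition Lip0 :: "'a::metric_space \<Rightarrow> ('a \<Rightarrow> 'k::real_normed_field) set" where
  "Lip0 z = {f. f z = 0 \<and> (\<exists>L. L-lipschitz_on UNIV f)}"

definition Lip0_ball :: "'a::metric_space \<Rightarrow> ('a \<Rightarrow> 'k::real_normed_field) set" where
  "Lip0_ball z = {f. f z = 0 \<and> 1-lipschitz_on UNIV f}"

definition delta :: "'a \<Rightarrow> ('a \<Rightarrow> 'k) \<Rightarrow> 'k" where
  "delta x = (\<lambda>f. f x)"

definition comb :: "nat \<Rightarrow> (nat \<Rightarrow> 'k::real_normed_field) \<Rightarrow> (nat \<Rightarrow> 'a) \<Rightarrow> ('a \<Rightarrow> 'k) \<Rightarrow> 'k" where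
  "comb n a x = (\<lambda>f. \<Sum>i<n. a i * delta (x i) f)"

definition dual_dist :: "'a::metric_space \<Rightarrow> (('a \<Rightarrow> 'k::real_normed_field) \<Rightarrow> 'k)
    \<Rightarrow> (('a \<Rightarrow> 'k) \<Rightarrow> 'k) \<Rightarrow> real" where
  "dual_dist z \<phi> \<psi> = (SUP f\<in>Lip0_ball z. norm (\<phi> f - \<psi> f))"

text \<open>Membership in F(K): norm-closed linear span of delta(K) in Lip_0(M)^*.\<close>
definition in_F :: "'a::metric_space \<Rightarrow> 'a set \<Rightarrow> (('a \<Rightarrow> 'k::real_normed_field) \<Rightarrow> 'k) \<Rightarrow> bool" where
  "in_F z K \<gamma> \<longleftrightarrow> (\<forall>\<epsilon>>0. \<exists>n a x. (\<forall>i<n. x i \<in> K) \<and> dual_dist z \<gamma> (comb n a x) < \<epsilon>)"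

definition supp :: "'a::metric_space \<Rightarrow> (('a \<Rightarrow> 'k::real_normed_field) \<Rightarrow> 'k) \<Rightarrow> 'a set" where
  "supp z \<gamma> = \<Inter>{K. closed K \<and> in_F z K \<gamma>}"

text \<open>Weak convergence in F(M) (dual of F(M) is Lip_0(M)).\<close>
definition weak_conv :: "'a::metric_space \<Rightarrow> (nat \<Rightarrow> ('a \<Rightarrow> 'k::real_normed_field) \<Rightarrow> 'k)
    \<Rightarrow> (('a \<Rightarrow> 'k) \<Rightarrow> 'k) \<Rightarrow> bool" where
  "weak_conv z \<Gamma> \<gamma> \<longleftrightarrow> (\<forall>f\<in>Lip0 z. (\<lambda>n. \<Gamma> n f) \<longlonglongrightarrow> \<gamma> f)"

end

theory Submission
  imports Defs
begin

text \<open>Suppose every sequence \<open>x\<^sub>m(n)\<close> stays eventually at distance at least \<open>r > 0\<close> from \<open>p\<close>.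
  Shrinking \<open>r\<close>, the tent function \<open>q \<mapsto> max 0 (r - d(q,p))\<close> is a norm-one element of
  \<open>Lip\<^sub>0(M)\<close> that vanishes at every \<open>x\<^sub>m(n)\<close> for large \<open>n\<close> and at every point of the
  representation of \<open>\<gamma>\<close> other than \<open>p\<close>. Testing weak convergence against it shows that the total
  coefficient of \<open>\<gamma>\<close> at \<open>p\<close> is zero, so \<open>\<gamma>\<close> is a combination of Dirac functionals at points
  other than \<open>p\<close>, and \<open>p\<close> is not in its support.\<close>

lemma supp_subset_of_finite_sum:
  fixes z :: "'a::metric_space" and \<gamma> :: "('a \<Rightarrow> 'k::real_normed_field) \<Rightarrow> 'k"
  assumes I: "finite I"
    and \<gamma>_eq: "\<And>g. g \<in> Lip0_ball z \<Longrightarrow> \<gamma> g = (\<Sum>i\<in>I. b i * g (y i))"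
  shows "supp z \<gamma> \<subseteq> y ` I"
proof -
  obtain h where h: "bij_betw h {..<card I} I"
    using ex_bij_betw_nat_finite[OF I] by (auto simp: lessThan_atLeast0)
  have comb_h: "comb (card I) (b \<circ> h) (y \<circ> h) g = (\<Sum>i\<in>I. b i * g (y i))" for g
    unfolding comb_def delta_def using sum.reindex_bij_betw[OF h, of "\<lambda>i. b i * g (y i)"] by simp
  have "(\<lambda>_. 0) \<in> (Lip0_ball z :: ('a \<Rightarrow> 'k) set)"
    unfolding Lip0_ball_def by (auto intro: lipschitz_onI)
  then have "dual_dist z \<gamma> (comb (card I) (b \<circ> h) (y \<circ> h)) = 0"
    unfolding dual_dist_def by (simp add: comb_h \<gamma>_eq cong: SUP_cong) (subst cSUP_const; auto)
  moreover have "\<forall>i<card I. (y \<circ> h) i \<in> y ` I"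
    using h by (auto simp: bij_betw_def)
  ultimately have "in_F z (y ` I) \<gamma>"
    unfolding in_F_def by (metis less_eq_real_def)
  moreover have "closed (y ` I)"
    using I by (simp add: finite_imp_closed)
  ultimately show ?thesis
    unfolding supp_def by blast
qed

lemma comb_split_at:
  "comb k b y g = (\<Sum>i\<in>{i. i < k \<and> y i = q}. b i) * g q + (\<Sum>i\<in>{i. i < k \<and> y i \<noteq> q}. b i * g (y i))"
proof -
  have "comb k b y g = (\<Sum>i<k. (if y i = q then b i else 0) * g q + (if y i \<noteq> q then b i * g (y i) else 0))"
    unfolding comb_def delta_def by (rule sum.cong) auto
  then show ?thesis
    by (simp add: sum.distrib sum_distrib_right sum.inter_filter[of "{..<k}", simplified])
qed

lemma supp_comb_subset:
  fixes z :: "'a::metric_space" and b :: "nat \<Rightarrow> 'k::real_normed_field"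
  shows "supp z (comb k b y) \<subseteq> y ` {i. i < k \<and> y i \<noteq> z}"
  by (rule supp_subset_of_finite_sum) (simp_all add: comb_split_at[where q = z] Lip0_ball_def)

lemma notin_supp_comb_if_no_mass:
  fixes z :: "'a::metric_space" and b :: "nat \<Rightarrow> 'k::real_normed_field"
  assumes "(\<Sum>i\<in>{i. i < k \<and> y i = p}. b i) = 0"
  shows "p \<notin> supp z (comb k b y)"
proof -
  have "supp z (comb k b y) \<subseteq> y ` {i. i < k \<and> y i \<noteq> p}"
    by (rule supp_subset_of_finite_sum) (simp_all add: comb_split_at[where q = p] assms)
  then show ?thesis by blast
qed

definition tent :: "real \<Rightarrow> 'a::metric_space \<Rightarrow> 'a \<Rightarrow> 'k::real_normed_field" where
  "tent r p = (\<lambda>q. of_real (max 0 (r - dist q p)))"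

lemma tent_lipschitz: "1-lipschitz_on UNIV (tent r p)"
proof (rule lipschitz_onI)
  fix u v
  have "\<bar>max 0 (r - dist u p) - max 0 (r - dist v p)\<bar> \<le> \<bar>dist u p - dist v p\<bar>" by auto
  also have "\<dots> \<le> dist u v"
    using abs_dist_diff_le[of u p v] by (simp add: dist_commute)
  finally show "dist (tent r p u) (tent r p v) \<le> 1 * dist u v"
    unfolding tent_def dist_norm by (simp flip: of_real_diff)
qed simp

lemma tent_eq_0: "r \<le> dist q p \<Longrightarrow> tent r p q = 0"
  by (simp add: tent_def)

lemma tent_center: "0 \<le> r \<Longrightarrow> tent r p p = of_real r"
  by (simp add: tent_def)

lemma eventually_gt_if_liminf_nonzero:
  fixes f :: "nat \<Rightarrow> real"
  assumes nonneg: "\<And>n. 0 \<le> f n" and "liminf (\<lambda>n. ereal (f n)) \<noteq> 0"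
  shows "\<exists>r>0. eventually (\<lambda>n. r < f n) sequentially"
proof -
  have "0 \<le> liminf (\<lambda>n. ereal (f n))"
    by (rule Liminf_bounded) (simp add: nonneg)
  with assms(2) have "0 < liminf (\<lambda>n. ereal (f n))"
    by (simp add: order_less_le)
  then obtain r where r: "0 < ereal r" "ereal r < liminf (\<lambda>n. ereal (f n))"
    by (blast dest: ereal_dense2)
  have "eventually (\<lambda>n. ereal r < ereal (f n)) sequentially"
    using le_Liminf_iff[THEN iffD1, OF order_refl] r(2) by blast
  with r(1) show ?thesis
    by (intro exI[of _ r]) simp
qed

lemma positive_lower_bound_finite:
  fixes S :: "real set"
  assumes "finite S" "\<And>s. s \<in> S \<Longrightarrow> 0 < s"
  shows "\<exists>r>0. \<forall>s\<in>S. r \<le> s"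
  using assms by (intro exI[of _ "Min (insert 1 S)"]) auto

lemma eventually_all_far_if_liminf_nonzero:
  fixes x :: "nat \<Rightarrow> nat \<Rightarrow> 'a::metric_space"
  assumes "\<forall>m<k. liminf (\<lambda>n. ereal (dist (x n m) p)) \<noteq> 0"
  shows "\<exists>R>0. eventually (\<lambda>n. \<forall>m<k. R \<le> dist (x n m) p) sequentially"
proof -
  from assms have "\<forall>m<k. \<exists>R>0. eventually (\<lambda>n. R < dist (x n m) p) sequentially"
    by (auto intro: eventually_gt_if_liminf_nonzero)
  then obtain R where R: "\<And>m. m < k \<Longrightarrow> R m > 0 \<and> eventually (\<lambda>n. R m < dist (x n m) p) sequentially"
    by metis
  have "\<And>s. s \<in> R ` {..<k} \<Longrightarrow> 0 < s"
    using R by auto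
  then obtain r where r: "r > 0" "\<forall>s\<in>R ` {..<k}. r \<le> s"
    using positive_lower_bound_finite[of "R ` {..<k}"] by blast
  have "eventually (\<lambda>n. \<forall>m\<in>{..<k}. R m < dist (x n m) p) sequentially"
    by (rule eventually_ball_finite) (use R in auto)
  then have "eventually (\<lambda>n. \<forall>m<k. r \<le> dist (x n m) p) sequentially"
  proof (rule eventually_mono)
    fix n assume far: "\<forall>m\<in>{..<k}. R m < dist (x n m) p"
    show "\<forall>m<k. r \<le> dist (x n m) p"
    proof (intro allI impI)
      fix m assume "m < k"
      then have "r \<le> R m" "R m < dist (x n m) p" using r(2) far by auto
      then show "r \<le> dist (x n m) p" by linarith
    qed
  qed
  with r(1) show ?thesis by blast
qed

lemma eventually_comb_tent_eq_0:
  fixes x :: "nat \<Rightarrow> nat \<Rightarrow> 'a::metric_space" and a :: "nat \<Rightarrow> nat \<Rightarrow> 'k::real_normed_field"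
  assumes "eventually (\<lambda>n. \<forall>m<k. r \<le> dist (x n m) p) sequentially"
  shows "eventually (\<lambda>n. comb k (a n) (x n) (tent r p) = 0) sequentially"
  using assms
proof (rule eventually_mono)
  fix n assume "\<forall>m<k. r \<le> dist (x n m) p"
  then show "comb k (a n) (x n) (tent r p) = 0"
    unfolding comb_def delta_def by (intro sum.neutral) (simp add: tent_eq_0)
qed

lemma weak_limit_vanishes:
  assumes "weak_conv z \<Gamma> \<gamma>" "f \<in> Lip0 z" "eventually (\<lambda>n. \<Gamma> n f = 0) sequentially"
  shows "\<gamma> f = 0"
proof -
  have "(\<lambda>n. \<Gamma> n f) \<longlonglongrightarrow> \<gamma> f"
    using assms(1,2) unfolding weak_conv_def by blast
  moreover have "(\<lambda>n. \<Gamma> n f) \<longlonglongrightarrow> 0"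
    using assms(3) by (simp add: tendsto_eventually)
  ultimately show ?thesis by (rule LIMSEQ_unique)
qed

theorem lemma2p2:
  fixes z :: "'a::metric_space"
    and k :: nat
    and a :: "nat \<Rightarrow> nat \<Rightarrow> 'k::real_normed_field"
    and x :: "nat \<Rightarrow> nat \<Rightarrow> 'a"
    and b :: "nat \<Rightarrow> 'k"
    and y :: "nat \<Rightarrow> 'a"
  assumes "complete (UNIV :: 'a set)"
    and "weak_conv z (\<lambda>n. comb k (a n) (x n)) (comb k b y)"
    and "p \<in> supp z (comb k b y)"
  shows "\<exists>m<k. liminf (\<lambda>n. ereal (dist (x n m) p)) = 0"
proof (rule ccontr)
  assume "\<not> ?thesis"
  then obtain R where R: "R > 0" "eventually (\<lambda>n. \<forall>m<k. R \<le> dist (x n m) p) sequentially"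
    using eventually_all_far_if_liminf_nonzero by blast
  have "p \<noteq> z"
    using supp_comb_subset assms(3) by blast
  define S where "S = insert R (insert (dist z p) ((\<lambda>i. dist (y i) p) ` {i. i < k \<and> y i \<noteq> p}))"
  have "finite S" "\<And>s. s \<in> S \<Longrightarrow> 0 < s"
    using R(1) \<open>p \<noteq> z\<close> by (auto simp: S_def)
  then obtain r where r: "r > 0" "\<forall>s\<in>S. r \<le> s"
    using positive_lower_bound_finite by blast
  have "r \<le> R"
    using r(2) by (simp add: S_def)
  have "tent r p \<in> (Lip0 z :: ('a \<Rightarrow> 'k) set)"
    unfolding Lip0_def using tent_lipschitz tent_eq_0 r(2) by (auto simp: S_def)
  moreover from R(2) \<open>r \<le> R\<close> have "eventually (\<lambda>n. \<forall>m<k. r \<le> dist (x n m) p) sequentially"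
    by (auto elim!: eventually_mono)
  then have "eventually (\<lambda>n. comb k (a n) (x n) (tent r p) = 0) sequentially"
    by (rule eventually_comb_tent_eq_0)
  ultimately have "comb k b y (tent r p) = 0"
    by (rule weak_limit_vanishes[OF assms(2)])
  moreover have "comb k b y (tent r p) = (\<Sum>i\<in>{i. i < k \<and> y i = p}. b i) * of_real r"
    using r by (simp add: comb_split_at[where q = p] tent_center tent_eq_0 S_def)
  ultimately have "(\<Sum>i\<in>{i. i < k \<and> y i = p}. b i) = 0"
    using r(1) by simp
  then show False
    using notin_supp_comb_if_no_mass assms(3) by blast
qed

end
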